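(* Let $\alpha(\cdot,t)$ be a solution of the length-constrained elastic flow $$\partial_t\alpha=\Big(k_{ss}+\tfrac12k^3-\lambda(t)k\Big)\nu,\qquad \lambda(t)=\frac{-\int_\alpha k_s^2\,ds+\frac12\int_\alpha k^4\,ds}{\int_\alpha k^2\,ds},$$ with generalised Neumann boundary conditions in a cone with $\omega=\frac{\theta_1-\theta_2}{2\pi}$, and let $L_0$ be the length of the initial curve. Then, while the solution exists, $$-\frac{L_0\int_\alpha k_s^2\,ds}{(2\pi\omega)^2}\le\lambda(t)\le\frac{2L_0}{\pi}\int_\alpha k_s^2\,ds+\bar k^2.$$
   Context: The cone: fix $0\le\theta_2<\theta_1<2\pi$; its boundary consists of the open rays $\bar\gamma_i=\{(\rho\cos\theta_i,\rho\sin\theta_i):\rho>0\}$, $i=1,2$. Generalised Neumann boundary conditions: for each $t$ the curve's interior lies in the open cone between the rays, $\alpha(-1,t)\in\bar\gamma_1$, $\alpha(1,t)\in\bar\gamma_2$, the curve meets each ray perpendicularly at its endpoint, and $k_s(\pm1,t)=0$. Here $s$ is arc length, $\nu$ the outer unit normal, $k=-\langle\alpha_{ss},\nu\rangle$ the scalar curvature (so $\int_\alpha k\,ds=2\pi\omega$), $L$ the length, and $\bar k=\frac1L\int_\alpha k\,ds$. Integrals are over $\alpha(\cdot,t)$ with respect to arc length. *)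

theory Defs
  imports "HOL-Analysis.Analysis"
begin

text \<open>Curves in the plane are complex-valued; a time-dependent curve is a map
  alpha :: real \<times> real \<Rightarrow> complex, (u,t) with u in [-1,1] the parameter and t the time.\<close>

definition pD1 :: "(real \<times> real \<Rightarrow> 'a::real_normed_vector) \<Rightarrow> real \<times> real \<Rightarrow> 'a" where
  "pD1 f p = vector_derivative (\<lambda>v. f (v, snd p)) (at (fst p))"

definition pD2 :: "(real \<times> real \<Rightarrow> 'a::real_normed_vector) \<Rightarrow> real \<times> real \<Rightarrow> 'a" where
  "pD2 f p = vector_derivative (\<lambda>s. f (fst p, s)) (at (snd p))"

fun pderivs :: "bool list \<Rightarrow> (real \<times> real \<Rightarrow> 'a::real_normed_vector) \<Rightarrow> real \<times> real \<Rightarrow> 'a" where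
  "pderivs [] f = f"
| "pderivs (b # bs) f = (if b then pD1 (pderivs bs f) else pD2 (pderivs bs f))"

definition smooth_on :: "(real \<times> real) set \<Rightarrow> (real \<times> real \<Rightarrow> 'a::real_normed_vector) \<Rightarrow> bool" where
  "smooth_on S f \<longleftrightarrow> open S \<and>
     (\<forall>bs. continuous_on S (pderivs bs f) \<and>
        (\<forall>p\<in>S. (\<lambda>v. pderivs bs f (v, snd p)) differentiable (at (fst p)) \<and>
               (\<lambda>s. pderivs bs f (fst p, s)) differentiable (at (snd p))))"

definition sdiff :: "(real \<times> real \<Rightarrow> complex) \<Rightarrow> (real \<times> real \<Rightarrow> 'a::real_normed_vector) \<Rightarrow> real \<times> real \<Rightarrow> 'a" where
  "sdiff \<alpha> g p = (1 / norm (pD1 \<alpha> p)) *\<^sub>R pD1 g p"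

definition tangent :: "(real \<times> real \<Rightarrow> complex) \<Rightarrow> real \<times> real \<Rightarrow> complex" where
  "tangent \<alpha> = sdiff \<alpha> \<alpha>"

text \<open>Outer unit normal: the unit tangent rotated by +90 degrees (for a curve running from
  the ray at angle theta1 to the ray at angle theta2 < theta1, this points away from the vertex,
  and gives total curvature theta1 - theta2 for circular arcs about the vertex).\<close>
definition normal :: "(real \<times> real \<Rightarrow> complex) \<Rightarrow> real \<times> real \<Rightarrow> complex" where
  "normal \<alpha> p = \<i> * tangent \<alpha> p"

definition curv :: "(real \<times> real \<Rightarrow> complex) \<Rightarrow> real \<times> real \<Rightarrow> real" where
  "curv \<alpha> p = - (sdiff \<alpha> (sdiff \<alpha> \<alpha>) p \<bullet> normal \<alpha> p)"

definition arc_int :: "(real \<times> real \<Rightarrow> complex) \<Rightarrow> real \<Rightarrow> (real \<times> real \<Rightarrow> real) \<Rightarrow> real" where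
  "arc_int \<alpha> t g = integral {-1..1} (\<lambda>u. g (u, t) * norm (pD1 \<alpha> (u, t)))"

definition curve_length :: "(real \<times> real \<Rightarrow> complex) \<Rightarrow> real \<Rightarrow> real" where
  "curve_length \<alpha> t = arc_int \<alpha> t (\<lambda>_. 1)"

definition mean_curv :: "(real \<times> real \<Rightarrow> complex) \<Rightarrow> real \<Rightarrow> real" where
  "mean_curv \<alpha> t = arc_int \<alpha> t (curv \<alpha>) / curve_length \<alpha> t"

definition elastic_lambda :: "(real \<times> real \<Rightarrow> complex) \<Rightarrow> real \<Rightarrow> real" where
  "elastic_lambda \<alpha> t =
     (- arc_int \<alpha> t (\<lambda>p. (sdiff \<alpha> (curv \<alpha>) p)^2) + 1/2 * arc_int \<alpha> t (\<lambda>p. (curv \<alpha> p)^4))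
     / arc_int \<alpha> t (\<lambda>p. (curv \<alpha> p)^2)"

definition ray :: "real \<Rightarrow> complex set" where
  "ray \<theta> = {complex_of_real \<rho> * cis \<theta> | \<rho>. \<rho> > 0}"

definition open_cone :: "real \<Rightarrow> real \<Rightarrow> complex set" where
  "open_cone \<theta>1 \<theta>2 = {complex_of_real \<rho> * cis \<phi> | \<rho> \<phi>. \<rho> > 0 \<and> \<theta>2 < \<phi> \<and> \<phi> < \<theta>1}"

definition gen_neumann :: "real \<Rightarrow> real \<Rightarrow> (real \<times> real \<Rightarrow> complex) \<Rightarrow> real \<Rightarrow> bool" where
  "gen_neumann \<theta>1 \<theta>2 \<alpha> t \<longleftrightarrow>
     (\<forall>u\<in>{-1<..<1}. \<alpha> (u, t) \<in> open_cone \<theta>1 \<theta>2) \<and>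
     \<alpha> (-1, t) \<in> ray \<theta>1 \<and> \<alpha> (1, t) \<in> ray \<theta>2 \<and>
     tangent \<alpha> (-1, t) \<bullet> cis \<theta>1 = 0 \<and> tangent \<alpha> (1, t) \<bullet> cis \<theta>2 = 0 \<and>
     sdiff \<alpha> (curv \<alpha>) (-1, t) = 0 \<and> sdiff \<alpha> (curv \<alpha>) (1, t) = 0"

end

theory Submission
  imports Defs
begin

text \<open>
  Length is conserved: for a normal velocity F nu one has d/dt |alpha_u| = F k |alpha_u|, and
  for F = k_ss + k^3/2 - lambda k the integral of F k ds vanishes after integrating k k_ss by
  parts (k_s = 0 at both ends), by the very choice of lambda. So L(t) = L_0 and both bounds are
  statements about a single curve. By Cauchy-Schwarz, (2 pi omega)^2 = (int k ds)^2 <= L int k^2,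
  hence lambda >= - int k_s^2 / int k^2 >= - L int k_s^2 / (2 pi omega)^2. For the upper bound,
  lambda <= (int k^4 / int k^2) / 2 <= max k^2 / 2, and a Green-function estimate gives
  (k(u) - mean k)^2 <= (L / 3) int k_s^2 everywhere, so max k^2 / 2 <= (mean k)^2 + (L / 3) int k_s^2,
  and 1/3 <= 2/pi.
\<close>

section \<open>Weighted integral inequalities on an interval\<close>

lemma sq_le_mult_if_quadratic_nonneg:
  fixes X Y Z :: real
  assumes "0 \<le> X" and nonneg: "\<And>s. 0 \<le> s^2 * X - 2 * s * Y + Z"
  shows "Y^2 \<le> X * Z"
proof (cases "X = 0")
  case True
  have "Y = 0"
  proof (rule ccontr)
    assume "Y \<noteq> 0"
    then show False using nonneg[of "(Z + 1) / (2 * Y)"] True by simp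
  qed
  then show ?thesis using nonneg[of 0] True by simp
next
  case False
  then have "0 < X" using \<open>0 \<le> X\<close> by simp
  moreover have "0 \<le> (Y / X)^2 * X - 2 * (Y / X) * Y + Z" by (rule nonneg)
  ultimately show ?thesis by (simp add: field_simps power2_eq_square)
qed

lemma integral_Cauchy_Schwarz_weighted:
  fixes f g w :: "real \<Rightarrow> real"
  assumes f: "continuous_on {a..b} f" and g: "continuous_on {a..b} g"
    and w: "continuous_on {a..b} w" and w_nonneg: "\<And>x. x \<in> {a..b} \<Longrightarrow> 0 \<le> w x"
  shows "(integral {a..b} (\<lambda>x. f x * g x * w x))^2
    \<le> integral {a..b} (\<lambda>x. (f x)^2 * w x) * integral {a..b} (\<lambda>x. (g x)^2 * w x)"
proof (rule sq_le_mult_if_quadratic_nonneg)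
  have int: "(\<lambda>x. h x * w x) integrable_on {a..b}" if "continuous_on {a..b} h" for h
    by (intro integrable_continuous_interval continuous_intros that w)
  show "0 \<le> integral {a..b} (\<lambda>x. (f x)^2 * w x)"
    by (intro integral_nonneg int continuous_intros f) (simp add: w_nonneg)
  fix s :: real
  have "((\<lambda>x. s^2 * ((f x)^2 * w x) - 2 * s * (f x * g x * w x) + (g x)^2 * w x) has_integral
      s^2 * integral {a..b} (\<lambda>x. (f x)^2 * w x) - 2 * s * integral {a..b} (\<lambda>x. f x * g x * w x)
      + integral {a..b} (\<lambda>x. (g x)^2 * w x)) {a..b}"
    using int[of "\<lambda>x. (f x)^2"] int[of "\<lambda>x. f x * g x"] int[of "\<lambda>x. (g x)^2"]
    by (intro has_integral_add has_integral_diff has_integral_mult_right integrable_integral)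
       (auto intro: continuous_intros f g)
  moreover have "0 \<le> s^2 * ((f x)^2 * w x) - 2 * s * (f x * g x * w x) + (g x)^2 * w x"
    if "x \<in> {a..b}" for x
  proof -
    have "s^2 * ((f x)^2 * w x) - 2 * s * (f x * g x * w x) + (g x)^2 * w x = (s * f x - g x)^2 * w x"
      by (simp add: power2_eq_square algebra_simps)
    then show ?thesis using w_nonneg[OF that] by simp
  qed
  ultimately show "0 \<le> s^2 * integral {a..b} (\<lambda>x. (f x)^2 * w x)
      - 2 * s * integral {a..b} (\<lambda>x. f x * g x * w x) + integral {a..b} (\<lambda>x. (g x)^2 * w x)"
    by (rule has_integral_nonneg)
qed

lemma sq_add_le_add_mult_add:
  fixes a b X1 X2 A1 A2 :: real
  assumes "a^2 \<le> X1 * A1" "b^2 \<le> X2 * A2" "0 \<le> X1" "0 \<le> X2" "0 \<le> A1" "0 \<le> A2"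
  shows "(a + b)^2 \<le> (X1 + X2) * (A1 + A2)"
proof -
  have "(\<bar>a\<bar> * \<bar>b\<bar>)^2 \<le> (X1 * A1) * (X2 * A2)"
    using assms by (simp add: power_mult_distrib mult_mono)
  also have "\<dots> \<le> ((X1 * A2 + X2 * A1) / 2)^2"
    using zero_le_power2[of "X1 * A2 - X2 * A1"] by (simp add: power2_eq_square field_simps)
  finally have "\<bar>a\<bar> * \<bar>b\<bar> \<le> (X1 * A2 + X2 * A1) / 2"
    by (rule power2_le_imp_le) (use assms in simp)
  then have "a * b \<le> (X1 * A2 + X2 * A1) / 2"
    by (metis abs_ge_self abs_mult order_trans)
  then show ?thesis using assms(1,2) by (simp add: power2_eq_square algebra_simps)
qed

lemma sq_add_le_cube_add_mult_add:
  fixes x z p q A1 A2 :: real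
  assumes "x^2 \<le> p^3 / 3 * A1" "z^2 \<le> q^3 / 3 * A2" "0 \<le> p" "0 \<le> q" "0 \<le> A1" "0 \<le> A2"
  shows "(x + z)^2 \<le> (p + q)^3 / 3 * (A1 + A2)"
proof -
  have "(x + z)^2 \<le> (p^3 / 3 + q^3 / 3) * (A1 + A2)"
    by (rule sq_add_le_add_mult_add) (use assms in auto)
  also have "\<dots> \<le> (p + q)^3 / 3 * (A1 + A2)"
  proof (rule mult_right_mono)
    have "(p + q)^3 / 3 - (p^3 / 3 + q^3 / 3) = p * q * (p + q)"
      by (simp add: power3_eq_cube field_simps)
    moreover have "0 \<le> p * q * (p + q)" using assms by simp
    ultimately show "p^3 / 3 + q^3 / 3 \<le> (p + q)^3 / 3" by linarith
  qed (use assms in simp)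
  finally show ?thesis .
qed

lemma has_integral_sq_primitive:
  fixes s S :: "real \<Rightarrow> real"
  assumes "c \<le> d" and s: "\<And>x. x \<in> {c..d} \<Longrightarrow> (s has_real_derivative S x) (at x within {c..d})"
  shows "((\<lambda>x. (s x - y)^2 * S x) has_integral ((s d - y)^3 - (s c - y)^3) / 3) {c..d}"
proof -
  have "((\<lambda>x. (s x - y)^3 / 3) has_vector_derivative (s x - y)^2 * S x) (at x within {c..d})"
    if "x \<in> {c..d}" for x
    using s[OF that] unfolding has_real_derivative_iff_has_vector_derivative[symmetric]
    by (auto intro!: derivative_eq_intros simp: power2_eq_square)
  from fundamental_theorem_of_calculus[OF \<open>c \<le> d\<close> this] show ?thesis
    by (simp add: diff_divide_distrib)
qed

lemma has_integral_parts_primitive: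
  fixes s S K Ks :: "real \<Rightarrow> real"
  assumes "c \<le> d"
    and s: "\<And>x. x \<in> {c..d} \<Longrightarrow> (s has_real_derivative S x) (at x within {c..d})"
    and K: "\<And>x. x \<in> {c..d} \<Longrightarrow> (K has_real_derivative Ks x * S x) (at x within {c..d})"
  shows "((\<lambda>x. (s x - y) * Ks x * S x + K x * S x)
    has_integral (s d - y) * K d - (s c - y) * K c) {c..d}"
proof -
  have "((\<lambda>x. (s x - y) * K x) has_vector_derivative (s x - y) * Ks x * S x + K x * S x)
      (at x within {c..d})" if "x \<in> {c..d}" for x
    using s[OF that] K[OF that] unfolding has_real_derivative_iff_has_vector_derivative[symmetric]
    by (auto intro!: derivative_eq_intros simp: algebra_simps)
  from fundamental_theorem_of_calculus[OF \<open>c \<le> d\<close> this] show ?thesis .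
qed

lemma parts_primitive_sq_le:
  fixes s S K Ks :: "real \<Rightarrow> real"
  assumes "c \<le> d" and S: "continuous_on {c..d} S" "\<And>x. x \<in> {c..d} \<Longrightarrow> 0 \<le> S x"
    and Ks: "continuous_on {c..d} Ks"
    and s: "\<And>x. x \<in> {c..d} \<Longrightarrow> (s has_real_derivative S x) (at x within {c..d})"
    and K: "\<And>x. x \<in> {c..d} \<Longrightarrow> (K has_real_derivative Ks x * S x) (at x within {c..d})"
  shows "((s d - y) * K d - (s c - y) * K c - integral {c..d} (\<lambda>x. K x * S x))^2
    \<le> ((s d - y)^3 - (s c - y)^3) / 3 * integral {c..d} (\<lambda>x. (Ks x)^2 * S x)"
proof -
  have s_cont: "continuous_on {c..d} s" using s by (rule DERIV_continuous_on)
  have K_cont: "continuous_on {c..d} K" using K by (rule DERIV_continuous_on)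
  have "((\<lambda>x. K x * S x) has_integral integral {c..d} (\<lambda>x. K x * S x)) {c..d}"
    by (intro integrable_integral integrable_continuous_interval continuous_intros K_cont S)
  from has_integral_diff[OF has_integral_parts_primitive[OF \<open>c \<le> d\<close> s K, where y=y] this]
  have "(s d - y) * K d - (s c - y) * K c - integral {c..d} (\<lambda>x. K x * S x)
      = integral {c..d} (\<lambda>x. (s x - y) * Ks x * S x)"
    by (simp add: integral_unique algebra_simps)
  moreover have "(integral {c..d} (\<lambda>x. (s x - y) * Ks x * S x))^2
      \<le> integral {c..d} (\<lambda>x. (s x - y)^2 * S x) * integral {c..d} (\<lambda>x. (Ks x)^2 * S x)"
    by (intro integral_Cauchy_Schwarz_weighted continuous_intros s_cont Ks S)
  moreover have "integral {c..d} (\<lambda>x. (s x - y)^2 * S x) = ((s d - y)^3 - (s c - y)^3) / 3"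
    using has_integral_sq_primitive[OF \<open>c \<le> d\<close> s] by (rule integral_unique)
  ultimately show ?thesis by simp
qed

text \<open>A Green-function estimate: with s the primitive of S, integrate K' by parts against s
  on [a, u] and against s - L on [u, b], apply Cauchy-Schwarz on each piece, and use
  s^3 + (L - s)^3 <= L^3.\<close>

lemma weighted_oscillation_le:
  fixes S K Ks :: "real \<Rightarrow> real"
  assumes S: "continuous_on {a..b} S" "\<And>x. x \<in> {a..b} \<Longrightarrow> 0 \<le> S x"
    and Ks: "continuous_on {a..b} Ks"
    and K: "\<And>x. x \<in> {a..b} \<Longrightarrow> (K has_real_derivative Ks x * S x) (at x within {a..b})"
    and u: "u \<in> {a..b}"
  shows "(integral {a..b} S * K u - integral {a..b} (\<lambda>x. K x * S x))^2
    \<le> (integral {a..b} S)^3 / 3 * integral {a..b} (\<lambda>x. (Ks x)^2 * S x)"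
proof -
  define s where "s x = integral {a..x} S" for x
  define L where "L = integral {a..b} S"
  have au: "a \<le> u" and ub: "u \<le> b" using u by auto
  have left: "{a..u} \<subseteq> {a..b}" and right: "{u..b} \<subseteq> {a..b}" using ub au by auto
  have int: "f integrable_on {a..b}" if "continuous_on {a..b} f" for f :: "real \<Rightarrow> real"
    using that by (rule integrable_continuous_interval)
  have split: "integral {a..u} f + integral {u..b} f = integral {a..b} f"
    if "continuous_on {a..b} f" for f :: "real \<Rightarrow> real"
    by (rule Henstock_Kurzweil_Integration.integral_combine[OF au ub int[OF that]])
  have nonneg: "0 \<le> integral {c..d} f"
    if "continuous_on {a..b} f" "\<And>x. x \<in> {a..b} \<Longrightarrow> 0 \<le> f x" "{c..d} \<subseteq> {a..b}" for f :: "real \<Rightarrow> real" and c d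
    using integrable_on_subinterval[OF int[OF that(1)] that(3)] that(2,3)
    by (intro integral_nonneg) auto
  have su: "0 \<le> s u" "s u \<le> L"
    using nonneg[OF S left] nonneg[OF S right] split[OF S(1)] by (auto simp: s_def L_def)
  have s_a: "s a = 0" and s_b: "s b = L" by (simp_all add: s_def L_def)
  have s_sub: "(s has_real_derivative S x) (at x within T)" if "x \<in> T" "T \<subseteq> {a..b}" for x T
    unfolding s_def using integral_has_real_derivative[OF S(1)] that
    by (blast intro: has_field_derivative_subset)
  have K_sub: "(K has_real_derivative Ks x * S x) (at x within T)" if "x \<in> T" "T \<subseteq> {a..b}" for x T
    using has_field_derivative_subset[OF K that(2)] that by blast
  have S_sub: "0 \<le> S x" if "x \<in> T" "T \<subseteq> {a..b}" for x T
    using S(2) that by blast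
  have "(s u * K u - integral {a..u} (\<lambda>x. K x * S x))^2
      \<le> (s u)^3 / 3 * integral {a..u} (\<lambda>x. (Ks x)^2 * S x)"
    using parts_primitive_sq_le[OF au continuous_on_subset[OF S(1) left] S_sub[OF _ left]
        continuous_on_subset[OF Ks left] s_sub[OF _ left] K_sub[OF _ left], where y=0] left
    by (simp add: s_a)
  moreover have "((L - s u) * K u - integral {u..b} (\<lambda>x. K x * S x))^2
      \<le> (L - s u)^3 / 3 * integral {u..b} (\<lambda>x. (Ks x)^2 * S x)"
    using parts_primitive_sq_le[OF ub continuous_on_subset[OF S(1) right] S_sub[OF _ right]
        continuous_on_subset[OF Ks right] s_sub[OF _ right] K_sub[OF _ right], where y=L] right
    by (simp add: s_b power3_eq_cube algebra_simps)
  ultimately have "((s u * K u - integral {a..u} (\<lambda>x. K x * S x))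
      + ((L - s u) * K u - integral {u..b} (\<lambda>x. K x * S x)))^2
      \<le> (s u + (L - s u))^3 / 3
        * (integral {a..u} (\<lambda>x. (Ks x)^2 * S x) + integral {u..b} (\<lambda>x. (Ks x)^2 * S x))"
    by (rule sq_add_le_cube_add_mult_add) (use su left right S Ks in \<open>auto intro!: nonneg continuous_intros\<close>)
  moreover have "continuous_on {a..b} (\<lambda>x. K x * S x)" "continuous_on {a..b} (\<lambda>x. (Ks x)^2 * S x)"
    using DERIV_continuous_on[OF K] S Ks by (auto intro: continuous_intros)
  ultimately show ?thesis
    by (simp add: split[symmetric] L_def algebra_simps)
qed

lemma integral_weighted_sq_le:
  fixes S K :: "real \<Rightarrow> real"
  assumes S: "continuous_on {a..b} S" "\<And>x. x \<in> {a..b} \<Longrightarrow> 0 \<le> S x"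
    and K: "continuous_on {a..b} K"
  shows "(integral {a..b} (\<lambda>x. K x * S x))^2
    \<le> integral {a..b} (\<lambda>x. (K x)^2 * S x) * integral {a..b} S"
  using integral_Cauchy_Schwarz_weighted[OF K continuous_on_const S, of 1] by simp

lemma lambda_ratio_ge:
  fixes S K Ks :: "real \<Rightarrow> real"
  assumes S: "continuous_on {a..b} S" "\<And>x. x \<in> {a..b} \<Longrightarrow> 0 \<le> S x"
    and K: "continuous_on {a..b} K" and Ks: "continuous_on {a..b} Ks"
    and P_nz: "integral {a..b} (\<lambda>x. K x * S x) \<noteq> 0"
  defines "L \<equiv> integral {a..b} S" and "P \<equiv> integral {a..b} (\<lambda>x. K x * S x)"
    and "A \<equiv> integral {a..b} (\<lambda>x. (Ks x)^2 * S x)"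
    and "B \<equiv> integral {a..b} (\<lambda>x. (K x)^4 * S x)"
    and "C \<equiv> integral {a..b} (\<lambda>x. (K x)^2 * S x)"
  shows "- (L * A) / P^2 \<le> (- A + 1/2 * B) / C"
proof -
  have nonneg: "0 \<le> integral {a..b} (\<lambda>x. f x * S x)" if "continuous_on {a..b} f" "\<And>x. 0 \<le> f x" for f
    using that S by (intro integral_nonneg integrable_continuous_interval continuous_intros) auto
  have A: "0 \<le> A" and B: "0 \<le> B" and C: "0 \<le> C"
    unfolding A_def B_def C_def by (auto intro!: nonneg continuous_intros K Ks)
  have P2: "P^2 \<le> C * L" and "0 < P^2"
    using integral_weighted_sq_le[OF S K] P_nz by (simp_all add: P_def C_def L_def)
  then have "0 < C" using C by (cases "C = 0") auto
  have "- (L * A) / P^2 \<le> - A / C"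
    using mult_left_mono[OF P2 A] \<open>0 < C\<close> \<open>0 < P^2\<close> by (simp add: field_simps)
  also have "\<dots> \<le> (- A + 1/2 * B) / C" using \<open>0 < C\<close> B by (intro divide_right_mono) auto
  finally show ?thesis .
qed

lemma weighted_sq_le_mean_sq_add:
  fixes S K Ks :: "real \<Rightarrow> real"
  assumes S: "continuous_on {a..b} S" "\<And>x. x \<in> {a..b} \<Longrightarrow> 0 \<le> S x"
    and K: "\<And>x. x \<in> {a..b} \<Longrightarrow> (K has_real_derivative Ks x * S x) (at x within {a..b})"
    and Ks: "continuous_on {a..b} Ks"
    and u: "u \<in> {a..b}" and L_pos: "0 < integral {a..b} S"
  defines "L \<equiv> integral {a..b} S" and "P \<equiv> integral {a..b} (\<lambda>x. K x * S x)"
    and "A \<equiv> integral {a..b} (\<lambda>x. (Ks x)^2 * S x)"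
  shows "(K u)^2 \<le> 2 * (P / L)^2 + 2 * (L / 3 * A)"
proof -
  have "0 < L" using L_pos by (simp add: L_def)
  have "L^2 * (K u - P / L)^2 = (L * K u - P)^2"
    using \<open>0 < L\<close> by (simp add: field_simps power2_eq_square)
  also have "\<dots> \<le> L^3 / 3 * A"
    using weighted_oscillation_le[OF S Ks K u] unfolding L_def P_def A_def .
  also have "\<dots> = L^2 * (L / 3 * A)" by (simp add: power2_eq_square power3_eq_cube)
  finally have "(K u - P / L)^2 \<le> L / 3 * A"
    using \<open>0 < L\<close> by simp
  moreover have "(K u)^2 \<le> 2 * (P / L)^2 + 2 * (K u - P / L)^2"
    using zero_le_power2[of "K u - 2 * (P / L)"] by (simp add: power2_eq_square algebra_simps)
  ultimately show ?thesis by simp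
qed

lemma lambda_ratio_le:
  fixes S K Ks :: "real \<Rightarrow> real"
  assumes S: "continuous_on {a..b} S" "\<And>x. x \<in> {a..b} \<Longrightarrow> 0 \<le> S x"
    and K: "\<And>x. x \<in> {a..b} \<Longrightarrow> (K has_real_derivative Ks x * S x) (at x within {a..b})"
    and Ks: "continuous_on {a..b} Ks"
    and P_nz: "integral {a..b} (\<lambda>x. K x * S x) \<noteq> 0"
  defines "L \<equiv> integral {a..b} S" and "P \<equiv> integral {a..b} (\<lambda>x. K x * S x)"
    and "A \<equiv> integral {a..b} (\<lambda>x. (Ks x)^2 * S x)"
    and "B \<equiv> integral {a..b} (\<lambda>x. (K x)^4 * S x)"
    and "C \<equiv> integral {a..b} (\<lambda>x. (K x)^2 * S x)"
  shows "(- A + 1/2 * B) / C \<le> L / 3 * A + (P / L)^2"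
proof -
  have K_cont: "continuous_on {a..b} K" using K by (rule DERIV_continuous_on)
  have nonneg: "0 \<le> integral {a..b} (\<lambda>x. f x * S x)" if "continuous_on {a..b} f" "\<And>x. 0 \<le> f x" for f
    using that S by (intro integral_nonneg integrable_continuous_interval continuous_intros) auto
  have A: "0 \<le> A" and C: "0 \<le> C" and L: "0 \<le> L"
    using nonneg[of "\<lambda>_. 1"] unfolding A_def C_def L_def by (auto intro!: nonneg continuous_intros K_cont Ks)
  have "P^2 \<le> C * L" and "0 < P^2"
    using integral_weighted_sq_le[OF S K_cont] P_nz by (simp_all add: P_def C_def L_def)
  then have "0 < C" "0 < L" using C L by (cases "C = 0"; cases "L = 0"; auto)+
  define Q where "Q = 2 * (P / L)^2 + 2 * (L / 3 * A)"
  have K_sq: "(K x)^2 \<le> Q" if "x \<in> {a..b}" for x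
    using weighted_sq_le_mean_sq_add[OF S K Ks that] \<open>0 < L\<close>
    unfolding Q_def L_def P_def A_def by simp
  have "B \<le> integral {a..b} (\<lambda>x. Q * ((K x)^2 * S x))"
    unfolding B_def
  proof (rule integral_le)
    show "(\<lambda>x. (K x)^4 * S x) integrable_on {a..b}" "(\<lambda>x. Q * ((K x)^2 * S x)) integrable_on {a..b}"
      by (intro integrable_continuous_interval continuous_intros K_cont S)+
    show "(K x)^4 * S x \<le> Q * ((K x)^2 * S x)" if "x \<in> {a..b}" for x
    proof -
      have "0 \<le> (K x)^2 * S x" using S(2)[OF that] by simp
      from mult_right_mono[OF K_sq[OF that] this] show ?thesis
        by (simp add: power2_eq_square power4_eq_xxxx mult_ac)
    qed
  qed
  then have "B \<le> Q * C" by (simp add: C_def)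
  have "(- A + 1/2 * B) / C \<le> (1/2 * (Q * C)) / C"
    using \<open>B \<le> Q * C\<close> A \<open>0 < C\<close> by (intro divide_right_mono) auto
  also have "\<dots> = L / 3 * A + (P / L)^2" using \<open>0 < C\<close> by (simp add: Q_def)
  finally show ?thesis .
qed

lemma has_integral_mult_deriv_Neumann:
  fixes S K Ks D :: "real \<Rightarrow> real"
  assumes "a \<le> b" and S: "continuous_on {a..b} S"
    and K: "\<And>x. x \<in> {a..b} \<Longrightarrow> (K has_real_derivative Ks x * S x) (at x within {a..b})"
    and Ks: "continuous_on {a..b} Ks"
    and D: "\<And>x. x \<in> {a..b} \<Longrightarrow> (Ks has_real_derivative D x) (at x within {a..b})"
    and Ks_a: "Ks a = 0" and Ks_b: "Ks b = 0"
  shows "((\<lambda>x. K x * D x) has_integral - integral {a..b} (\<lambda>x. (Ks x)^2 * S x)) {a..b}"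
proof -
  have "((\<lambda>x. K x * Ks x) has_vector_derivative (Ks x)^2 * S x + K x * D x) (at x within {a..b})"
    if "x \<in> {a..b}" for x
    using K[OF that] D[OF that] unfolding has_real_derivative_iff_has_vector_derivative[symmetric]
    by (auto intro!: derivative_eq_intros simp: power2_eq_square algebra_simps)
  from fundamental_theorem_of_calculus[OF \<open>a \<le> b\<close> this]
  have "((\<lambda>x. (Ks x)^2 * S x + K x * D x) has_integral 0) {a..b}"
    by (simp add: Ks_a Ks_b)
  moreover have "((\<lambda>x. (Ks x)^2 * S x) has_integral integral {a..b} (\<lambda>x. (Ks x)^2 * S x)) {a..b}"
    by (intro integrable_integral integrable_continuous_interval continuous_intros Ks S)
  ultimately show ?thesis by (auto dest: has_integral_diff)
qed

text \<open>For K = k, Ks = k_s and D = d k_s / du = k_ss S, the integrand is F k S with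
  F = k_ss + k^3/2 - lambda k.\<close>

lemma has_integral_elastic_velocity_mult_curv:
  fixes S K Ks D :: "real \<Rightarrow> real"
  assumes "a \<le> b" and S: "continuous_on {a..b} S" "\<And>x. x \<in> {a..b} \<Longrightarrow> 0 \<le> S x"
    and K: "\<And>x. x \<in> {a..b} \<Longrightarrow> (K has_real_derivative Ks x * S x) (at x within {a..b})"
    and Ks: "continuous_on {a..b} Ks"
    and D: "\<And>x. x \<in> {a..b} \<Longrightarrow> (Ks has_real_derivative D x) (at x within {a..b})"
    and Ks_a: "Ks a = 0" and Ks_b: "Ks b = 0"
    and P_nz: "integral {a..b} (\<lambda>x. K x * S x) \<noteq> 0"
  defines "A \<equiv> integral {a..b} (\<lambda>x. (Ks x)^2 * S x)"
    and "B \<equiv> integral {a..b} (\<lambda>x. (K x)^4 * S x)"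
    and "C \<equiv> integral {a..b} (\<lambda>x. (K x)^2 * S x)"
  shows "((\<lambda>x. K x * D x + (1/2 * (K x)^3 - (- A + 1/2 * B) / C * K x) * K x * S x)
    has_integral 0) {a..b}"
proof -
  define lam where "lam = (- A + 1/2 * B) / C"
  have K_cont: "continuous_on {a..b} K" using K by (rule DERIV_continuous_on)
  have "((\<lambda>x. K x * D x + (1/2 * ((K x)^4 * S x) - lam * ((K x)^2 * S x)))
      has_integral - A + (1/2 * B - lam * C)) {a..b}"
    unfolding A_def B_def C_def
    by (intro has_integral_add has_integral_diff has_integral_mult_right
        has_integral_mult_deriv_Neumann[OF \<open>a \<le> b\<close> S(1) K Ks D Ks_a Ks_b]
        integrable_integral integrable_continuous_interval continuous_intros K_cont S(1))
  moreover have "C \<noteq> 0"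
    using integral_weighted_sq_le[OF S K_cont] P_nz by (auto simp: C_def)
  then have "- A + (1/2 * B - lam * C) = 0" by (simp add: lam_def)
  moreover have "K x * D x + (1/2 * ((K x)^4 * S x) - lam * ((K x)^2 * S x))
      = K x * D x + (1/2 * (K x)^3 - lam * K x) * K x * S x" for x
    by (simp add: power2_eq_square power3_eq_cube power4_eq_xxxx algebra_simps)
  ultimately show ?thesis by (simp add: lam_def)
qed

section \<open>Smooth maps of the parameter plane\<close>

lemma smooth_on_open: "smooth_on U f \<Longrightarrow> open U"
  by (simp add: smooth_on_def)

lemma smooth_on_continuous_on: "smooth_on U f \<Longrightarrow> continuous_on U (pderivs bs f)"
  by (simp add: smooth_on_def)

lemma smooth_on_has_vector_derivative_fst:
  assumes "smooth_on U f" "(u, t) \<in> U"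
  shows "((\<lambda>v. pderivs bs f (v, t)) has_vector_derivative pderivs (True # bs) f (u, t)) (at u)"
proof -
  have "(\<lambda>v. pderivs bs f (v, t)) differentiable (at u)"
    using assms unfolding smooth_on_def by (metis fst_conv snd_conv)
  then show ?thesis by (simp add: pD1_def vector_derivative_works[symmetric])
qed

lemma smooth_on_has_vector_derivative_snd:
  assumes "smooth_on U f" "(u, t) \<in> U"
  shows "((\<lambda>s. pderivs bs f (u, s)) has_vector_derivative pderivs (False # bs) f (u, t)) (at t)"
proof -
  have "(\<lambda>s. pderivs bs f (u, s)) differentiable (at t)"
    using assms unfolding smooth_on_def by (metis fst_conv snd_conv)
  then show ?thesis by (simp add: pD2_def vector_derivative_works[symmetric])
qed

lemma smooth_on_continuous_on_slice:
  assumes "smooth_on U f" and "V \<times> {t} \<subseteq> U"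
  shows "continuous_on V (\<lambda>v. pderivs bs f (v, t))"
  by (rule continuous_on_compose2[OF smooth_on_continuous_on[OF assms(1)]])
     (use assms(2) in \<open>auto intro!: continuous_intros\<close>)

lemma open_contains_square:
  fixes U :: "(real \<times> real) set"
  assumes "open U" and "(u, t) \<in> U"
  obtains d where "0 < d" "{u - d..u + d} \<times> {t - d..t + d} \<subseteq> U"
proof -
  obtain e where e: "0 < e" "ball (u, t) e \<subseteq> U" using assms open_contains_ball by blast
  have "{u - e/3..u + e/3} \<times> {t - e/3..t + e/3} \<subseteq> ball (u, t) e"
  proof clarify
    fix x y assume "x \<in> {u - e/3..u + e/3}" "y \<in> {t - e/3..t + e/3}"
    then have "dist (u, t) (x, y) \<le> \<bar>dist u x\<bar> + \<bar>dist t y\<bar>" "\<bar>dist u x\<bar> + \<bar>dist t y\<bar> < e"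
      using \<open>0 < e\<close> sqrt_sum_squares_le_sum_abs by (auto simp: dist_Pair_Pair dist_real_def)
    then show "(x, y) \<in> ball (u, t) e" by simp
  qed
  then show ?thesis using that[of "e/3"] e by auto
qed

lemma smooth_on_pD1_eq_integral_pD1_pD2:
  fixes f :: "real \<times> real \<Rightarrow> 'a::euclidean_space"
  assumes sm: "smooth_on U f" and "0 < d" "c \<le> t"
    and rect: "{u - d..u + d} \<times> {c..t} \<subseteq> U"
  shows "pD1 f (u, t) = pD1 f (u, c) + integral {c..t} (\<lambda>s. pD1 (pD2 f) (u, s))"
proof -
  define I where "I = {u - d..u + d}"
  have inU: "(x, s) \<in> U" if "x \<in> I" "s \<in> {c..t}" for x s using rect that by (auto simp: I_def)
  have ftc: "f (x, t) = f (x, c) + integral {c..t} (\<lambda>s. pD2 f (x, s))" if "x \<in> I" for x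
  proof -
    have "((\<lambda>s. pD2 f (x, s)) has_integral f (x, t) - f (x, c)) {c..t}"
      using smooth_on_has_vector_derivative_snd[OF sm inU[OF that], where bs="[]"] \<open>c \<le> t\<close>
      by (intro fundamental_theorem_of_calculus) (auto intro: has_vector_derivative_at_within)
    then show ?thesis by (simp add: integral_unique)
  qed
  have "((\<lambda>x. integral (cbox c t) (\<lambda>s. pD2 f (x, s))) has_vector_derivative
      integral (cbox c t) (\<lambda>s. pD1 (pD2 f) (u, s))) (at u within I)"
  proof (rule leibniz_rule_vector_derivative)
    show "((\<lambda>x. pD2 f (x, s)) has_vector_derivative pD1 (pD2 f) (x, s)) (at x within I)"
      if "x \<in> I" "s \<in> cbox c t" for x s
      using smooth_on_has_vector_derivative_fst[OF sm inU, of x s, where bs="[False]"] that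
      by (auto intro: has_vector_derivative_at_within)
    show "(\<lambda>s. pD2 f (x, s)) integrable_on cbox c t" if "x \<in> I" for x
    proof (rule integrable_continuous)
      have "continuous_on U (pD2 f)" using smooth_on_continuous_on[OF sm, of "[False]"] by simp
      then show "continuous_on (cbox c t) (\<lambda>s. pD2 f (x, s))"
        by (rule continuous_on_compose2) (use that inU in \<open>auto intro!: continuous_intros\<close>)
    qed
    have "continuous_on (I \<times> cbox c t) (pD1 (pD2 f))"
      using smooth_on_continuous_on[OF sm, of "[True, False]"] inU
      by (auto intro: continuous_on_subset)
    then show "continuous_on (I \<times> cbox c t) (\<lambda>(x, s). pD1 (pD2 f) (x, s))"
      by (simp add: case_prod_beta)
  qed (use \<open>0 < d\<close> in \<open>auto simp: I_def\<close>)
  then have "((\<lambda>x. integral {c..t} (\<lambda>s. pD2 f (x, s))) has_vector_derivative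
      integral {c..t} (\<lambda>s. pD1 (pD2 f) (u, s))) (at u)"
    using at_within_interior[of u I] \<open>0 < d\<close> by (simp add: I_def cbox_interval)
  moreover have "((\<lambda>x. f (x, c)) has_vector_derivative pD1 f (u, c)) (at u)"
    using smooth_on_has_vector_derivative_fst[OF sm inU, of u c, where bs="[]"] \<open>0 < d\<close> \<open>c \<le> t\<close>
    by (simp add: I_def)
  ultimately have "((\<lambda>x. f (x, c) + integral {c..t} (\<lambda>s. pD2 f (x, s))) has_vector_derivative
      pD1 f (u, c) + integral {c..t} (\<lambda>s. pD1 (pD2 f) (u, s))) (at u)"
    by (intro has_vector_derivative_add)
  then have "((\<lambda>x. f (x, t)) has_vector_derivative
      pD1 f (u, c) + integral {c..t} (\<lambda>s. pD1 (pD2 f) (u, s))) (at u)"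
    by (rule has_vector_derivative_transform_within_open[of _ _ _ "{u - d<..<u + d}"])
       (use \<open>0 < d\<close> ftc in \<open>auto simp: I_def\<close>)
  then show ?thesis by (simp add: pD1_def vector_derivative_at)
qed

lemma smooth_on_pD2_pD1_eq_pD1_pD2:
  fixes f :: "real \<times> real \<Rightarrow> 'a::euclidean_space"
  assumes sm: "smooth_on U f" and "(u, t) \<in> U"
  shows "pD2 (pD1 f) (u, t) = pD1 (pD2 f) (u, t)"
proof -
  obtain d where "0 < d" and square: "{u - d..u + d} \<times> {t - d..t + d} \<subseteq> U"
    using open_contains_square[OF smooth_on_open[OF sm] \<open>(u, t) \<in> U\<close>] .
  have eq: "pD1 f (u, s) = pD1 f (u, t - d) + integral {t - d..s} (\<lambda>r. pD1 (pD2 f) (u, r))"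
    if "s \<in> {t - d<..<t + d}" for s
    using that square by (intro smooth_on_pD1_eq_integral_pD1_pD2[OF sm \<open>0 < d\<close>]) auto
  have "continuous_on U (pD1 (pD2 f))" using smooth_on_continuous_on[OF sm, of "[True, False]"] by simp
  then have "continuous_on {t - d..t + d} (\<lambda>r. pD1 (pD2 f) (u, r))"
    by (rule continuous_on_compose2) (use square \<open>0 < d\<close> in \<open>auto intro!: continuous_intros\<close>)
  from integral_has_vector_derivative[OF this, of t]
  have "((\<lambda>s. integral {t - d..s} (\<lambda>r. pD1 (pD2 f) (u, r))) has_vector_derivative
      pD1 (pD2 f) (u, t)) (at t)"
    using at_within_interior[of t "{t - d..t + d}"] \<open>0 < d\<close> by simp
  then have "((\<lambda>s. pD1 f (u, t - d) + integral {t - d..s} (\<lambda>r. pD1 (pD2 f) (u, r)))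
      has_vector_derivative pD1 (pD2 f) (u, t)) (at t)"
    using has_vector_derivative_add[OF has_vector_derivative_const] by fastforce
  then have "((\<lambda>s. pD1 f (u, s)) has_vector_derivative pD1 (pD2 f) (u, t)) (at t)"
    by (rule has_vector_derivative_transform_within_open[of _ _ _ "{t - d<..<t + d}"])
       (use \<open>0 < d\<close> eq in auto)
  then show ?thesis by (simp add: pD2_def vector_derivative_at)
qed

section \<open>Curvature of a regular slice\<close>

lemma open_regular_slice:
  assumes "smooth_on U \<alpha>"
  shows "open {v. (v, t) \<in> U \<and> pD1 \<alpha> (v, t) \<noteq> 0}"
proof -
  have "open (U \<inter> pD1 \<alpha> -` (- {0}))"
    using smooth_on_continuous_on[OF assms, where bs="[True]"] smooth_on_open[OF assms]
    by (auto intro: continuous_open_preimage)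
  then have "open ((\<lambda>v. (v, t)) -` (U \<inter> pD1 \<alpha> -` (- {0})))"
    by (rule continuous_open_vimage) (auto intro: continuous_intros)
  then show ?thesis by (simp add: vimage_def)
qed

lemma has_real_derivative_norm_vector:
  fixes f :: "real \<Rightarrow> 'a::real_inner"
  assumes "(f has_vector_derivative f') (at x within s)" "f x \<noteq> 0"
  shows "((\<lambda>v. norm (f v)) has_real_derivative (f x \<bullet> f') / norm (f x)) (at x within s)"
proof -
  have "((\<lambda>v. norm (f v)) has_derivative (\<lambda>h. (h *\<^sub>R f') \<bullet> sgn (f x))) (at x within s)"
    using has_derivative_compose[OF assms(1)[unfolded has_vector_derivative_def]
        has_derivative_norm[OF assms(2)]] .
  moreover have "(\<lambda>h. (h *\<^sub>R f') \<bullet> sgn (f x)) = (*) ((f x \<bullet> f') / norm (f x))"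
    by (rule ext) (simp add: sgn_div_norm inner_commute divide_inverse mult_ac)
  ultimately show ?thesis by (simp add: has_field_derivative_def)
qed

lemma has_real_derivative_inner_vector:
  fixes f g :: "real \<Rightarrow> 'a::real_inner"
  assumes "(f has_vector_derivative f') (at x within s)" "(g has_vector_derivative g') (at x within s)"
  shows "((\<lambda>v. f v \<bullet> g v) has_real_derivative (f x \<bullet> g' + f' \<bullet> g x)) (at x within s)"
proof -
  have "((\<lambda>v. f v \<bullet> g v) has_derivative (\<lambda>h. f x \<bullet> (h *\<^sub>R g') + (h *\<^sub>R f') \<bullet> g x)) (at x within s)"
    using has_derivative_inner[OF assms[unfolded has_vector_derivative_def]] .
  moreover have "(\<lambda>h. f x \<bullet> (h *\<^sub>R g') + (h *\<^sub>R f') \<bullet> g x) = (*) (f x \<bullet> g' + f' \<bullet> g x)"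
    by (rule ext) (simp add: algebra_simps)
  ultimately show ?thesis by (simp add: has_field_derivative_def)
qed

lemma tangent_eq_scaleR: "tangent \<alpha> p = (1 / cmod (pD1 \<alpha> p)) *\<^sub>R pD1 \<alpha> p"
  by (simp add: tangent_def sdiff_def)

lemma tangent_has_vector_derivative:
  assumes sm: "smooth_on U \<alpha>" and p: "(u, t) \<in> U" and nz: "pD1 \<alpha> (u, t) \<noteq> 0"
  shows "((\<lambda>v. tangent \<alpha> (v, t)) has_vector_derivative
     (1 / cmod (pD1 \<alpha> (u, t))) *\<^sub>R pD1 (pD1 \<alpha>) (u, t)
      - ((pD1 \<alpha> (u, t) \<bullet> pD1 (pD1 \<alpha>) (u, t)) / cmod (pD1 \<alpha> (u, t)) ^ 3) *\<^sub>R pD1 \<alpha> (u, t)) (at u)"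
proof -
  have d1: "((\<lambda>v. pD1 \<alpha> (v, t)) has_vector_derivative pD1 (pD1 \<alpha>) (u, t)) (at u)"
    using smooth_on_has_vector_derivative_fst[OF sm p, where bs="[True]"] by simp
  have "((\<lambda>v. 1 / cmod (pD1 \<alpha> (v, t))) has_real_derivative
      - ((pD1 \<alpha> (u, t) \<bullet> pD1 (pD1 \<alpha>) (u, t)) / cmod (pD1 \<alpha> (u, t)) ^ 3)) (at u)"
    using nz by (auto intro!: derivative_eq_intros has_real_derivative_norm_vector[OF d1]
        simp: power2_eq_square power3_eq_cube)
  from has_vector_derivative_scaleR[OF this d1] show ?thesis
    by (simp add: tangent_eq_scaleR algebra_simps)
qed

text \<open>Curvature and its arc-length derivative as explicit expressions in z = alpha_u,
  w = alpha_uu and y = alpha_uuu; they carry the regularity of k and k_s.\<close>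

definition curv_expr :: "complex \<Rightarrow> complex \<Rightarrow> real" where
  "curv_expr z w = (Re w * Im z - Re z * Im w) / cmod z ^ 3"

definition curv_s_expr :: "complex \<Rightarrow> complex \<Rightarrow> complex \<Rightarrow> real" where
  "curv_s_expr z w y = (Re y * Im z - Re z * Im y) / cmod z ^ 4
      - 3 * (Re w * Im z - Re z * Im w) * (z \<bullet> w) / cmod z ^ 6"

lemma curv_eq_curv_expr:
  assumes sm: "smooth_on U \<alpha>" and p: "(u, t) \<in> U" and nz: "pD1 \<alpha> (u, t) \<noteq> 0"
  shows "curv \<alpha> (u, t) = curv_expr (pD1 \<alpha> (u, t)) (pD1 (pD1 \<alpha>) (u, t))"
proof -
  define z where "z = pD1 \<alpha> (u, t)"
  define w where "w = pD1 (pD1 \<alpha>) (u, t)"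
  have "pD1 (tangent \<alpha>) (u, t) = (1 / cmod z) *\<^sub>R w - ((z \<bullet> w) / cmod z ^ 3) *\<^sub>R z"
    using vector_derivative_at[OF tangent_has_vector_derivative[OF sm p nz]]
    by (simp add: pD1_def z_def w_def)
  then have "curv \<alpha> (u, t) = - (((1 / cmod z) *\<^sub>R ((1 / cmod z) *\<^sub>R w - ((z \<bullet> w) / cmod z ^ 3) *\<^sub>R z))
       \<bullet> (\<i> * ((1 / cmod z) *\<^sub>R z)))"
    by (simp add: curv_def normal_def tangent_def[symmetric] sdiff_def tangent_eq_scaleR z_def)
  also have "\<dots> = curv_expr z w"
    using nz by (simp add: curv_expr_def inner_complex_def power3_eq_cube field_simps z_def)
  finally show ?thesis by (simp add: z_def w_def)
qed

lemma curv_has_real_derivative: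
  assumes sm: "smooth_on U \<alpha>" and p: "(u, t) \<in> U" and nz: "pD1 \<alpha> (u, t) \<noteq> 0"
  shows "((\<lambda>v. curv \<alpha> (v, t)) has_real_derivative
     curv_s_expr (pD1 \<alpha> (u, t)) (pD1 (pD1 \<alpha>) (u, t)) (pD1 (pD1 (pD1 \<alpha>)) (u, t))
       * cmod (pD1 \<alpha> (u, t))) (at u)"
proof -
  have d1: "((\<lambda>v. pD1 \<alpha> (v, t)) has_vector_derivative pD1 (pD1 \<alpha>) (u, t)) (at u)"
    and d2: "((\<lambda>v. pD1 (pD1 \<alpha>) (v, t)) has_vector_derivative pD1 (pD1 (pD1 \<alpha>)) (u, t)) (at u)"
    using smooth_on_has_vector_derivative_fst[OF sm p, where bs="[True]"]
      smooth_on_has_vector_derivative_fst[OF sm p, where bs="[True, True]"] by simp_all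
  have norm: "((\<lambda>v. cmod (pD1 \<alpha> (v, t))) has_real_derivative
      (pD1 \<alpha> (u, t) \<bullet> pD1 (pD1 \<alpha>) (u, t)) / cmod (pD1 \<alpha> (u, t))) (at u)"
    by (rule has_real_derivative_norm_vector[OF d1 nz])
  have "((\<lambda>v. curv_expr (pD1 \<alpha> (v, t)) (pD1 (pD1 \<alpha>) (v, t))) has_real_derivative
     curv_s_expr (pD1 \<alpha> (u, t)) (pD1 (pD1 \<alpha>) (u, t)) (pD1 (pD1 (pD1 \<alpha>)) (u, t))
       * cmod (pD1 \<alpha> (u, t))) (at u)"
    unfolding curv_expr_def
    by (rule DERIV_cong, (rule has_field_derivative_Re[OF d1] has_field_derivative_Im[OF d1]
        has_field_derivative_Re[OF d2] has_field_derivative_Im[OF d2] norm derivative_intros)+)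
       (use nz in \<open>simp_all add: curv_s_expr_def field_simps eval_nat_numeral\<close>)
  then show ?thesis
    by (rule has_field_derivative_transform_within_open[OF _ open_regular_slice[OF sm, of t]])
       (use p nz curv_eq_curv_expr[OF sm] in auto)
qed

lemma sdiff_curv_eq_curv_s_expr:
  assumes sm: "smooth_on U \<alpha>" and p: "(u, t) \<in> U" and nz: "pD1 \<alpha> (u, t) \<noteq> 0"
  shows "sdiff \<alpha> (curv \<alpha>) (u, t)
    = curv_s_expr (pD1 \<alpha> (u, t)) (pD1 (pD1 \<alpha>) (u, t)) (pD1 (pD1 (pD1 \<alpha>)) (u, t))"
  using vector_derivative_at[OF curv_has_real_derivative[OF sm p nz,
      unfolded has_real_derivative_iff_has_vector_derivative]] nz
  by (simp add: sdiff_def pD1_def)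

lemma curv_has_real_derivative_sdiff:
  assumes "smooth_on U \<alpha>" and "(u, t) \<in> U" and "pD1 \<alpha> (u, t) \<noteq> 0"
  shows "((\<lambda>v. curv \<alpha> (v, t)) has_real_derivative
    sdiff \<alpha> (curv \<alpha>) (u, t) * cmod (pD1 \<alpha> (u, t))) (at u)"
  using curv_has_real_derivative[OF assms] sdiff_curv_eq_curv_s_expr[OF assms] by simp

lemma sdiff_curv_has_real_derivative:
  assumes sm: "smooth_on U \<alpha>" and p: "(u, t) \<in> U" and nz: "pD1 \<alpha> (u, t) \<noteq> 0"
  shows "((\<lambda>v. sdiff \<alpha> (curv \<alpha>) (v, t)) has_real_derivative pD1 (sdiff \<alpha> (curv \<alpha>)) (u, t)) (at u)"
proof -
  have d1: "((\<lambda>v. pD1 \<alpha> (v, t)) has_vector_derivative pD1 (pD1 \<alpha>) (u, t)) (at u)"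
    and d2: "((\<lambda>v. pD1 (pD1 \<alpha>) (v, t)) has_vector_derivative pD1 (pD1 (pD1 \<alpha>)) (u, t)) (at u)"
    and d3: "((\<lambda>v. pD1 (pD1 (pD1 \<alpha>)) (v, t)) has_vector_derivative pD1 (pD1 (pD1 (pD1 \<alpha>))) (u, t)) (at u)"
    using smooth_on_has_vector_derivative_fst[OF sm p, where bs="[True]"]
      smooth_on_has_vector_derivative_fst[OF sm p, where bs="[True, True]"]
      smooth_on_has_vector_derivative_fst[OF sm p, where bs="[True, True, True]"] by simp_all
  have norm: "((\<lambda>v. cmod (pD1 \<alpha> (v, t))) has_real_derivative
      (pD1 \<alpha> (u, t) \<bullet> pD1 (pD1 \<alpha>) (u, t)) / cmod (pD1 \<alpha> (u, t))) (at u)"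
    by (rule has_real_derivative_norm_vector[OF d1 nz])
  have "\<exists>D. ((\<lambda>v. curv_s_expr (pD1 \<alpha> (v, t)) (pD1 (pD1 \<alpha>) (v, t)) (pD1 (pD1 (pD1 \<alpha>)) (v, t)))
      has_real_derivative D) (at u)"
    unfolding curv_s_expr_def inner_complex_def
    by (rule exI, (rule has_field_derivative_Re[OF d1] has_field_derivative_Im[OF d1]
        has_field_derivative_Re[OF d2] has_field_derivative_Im[OF d2]
        has_field_derivative_Re[OF d3] has_field_derivative_Im[OF d3] norm derivative_intros
        | simp add: nz)+)
  then obtain D where "((\<lambda>v. curv_s_expr (pD1 \<alpha> (v, t)) (pD1 (pD1 \<alpha>) (v, t)) (pD1 (pD1 (pD1 \<alpha>)) (v, t)))
      has_real_derivative D) (at u)" ..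
  then have D: "((\<lambda>v. sdiff \<alpha> (curv \<alpha>) (v, t)) has_real_derivative D) (at u)"
    by (rule has_field_derivative_transform_within_open[OF _ open_regular_slice[OF sm, of t]])
       (use p nz sdiff_curv_eq_curv_s_expr[OF sm] in auto)
  moreover from D have "pD1 (sdiff \<alpha> (curv \<alpha>)) (u, t) = D"
    unfolding has_real_derivative_iff_has_vector_derivative pD1_def by (simp add: vector_derivative_at)
  ultimately show ?thesis by simp
qed

lemma continuous_on_sdiff_curv:
  assumes sm: "smooth_on U \<alpha>" and V: "V \<times> {t} \<subseteq> U"
    and nz: "\<And>v. v \<in> V \<Longrightarrow> pD1 \<alpha> (v, t) \<noteq> 0"
  shows "continuous_on V (\<lambda>v. sdiff \<alpha> (curv \<alpha>) (v, t))"
proof -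
  have "continuous_on V (\<lambda>v. pD1 \<alpha> (v, t))" "continuous_on V (\<lambda>v. pD1 (pD1 \<alpha>) (v, t))"
    "continuous_on V (\<lambda>v. pD1 (pD1 (pD1 \<alpha>)) (v, t))"
    using smooth_on_continuous_on_slice[OF sm V, where bs="[True]"]
      smooth_on_continuous_on_slice[OF sm V, where bs="[True, True]"]
      smooth_on_continuous_on_slice[OF sm V, where bs="[True, True, True]"] by simp_all
  then have "continuous_on V
      (\<lambda>v. curv_s_expr (pD1 \<alpha> (v, t)) (pD1 (pD1 \<alpha>) (v, t)) (pD1 (pD1 (pD1 \<alpha>)) (v, t)))"
    unfolding curv_s_expr_def inner_complex_def by (intro continuous_intros) (use nz in auto)
  then show ?thesis
    by (rule continuous_on_eq) (use V nz sdiff_curv_eq_curv_s_expr[OF sm] in auto)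
qed

section \<open>The length-constrained elastic flow\<close>

text \<open>Differentiating the orthogonality of alpha_t = F nu and tau in u, and using
  tau_u . nu = - |alpha_u| k, gives alpha_tu . tau = F k |alpha_u|; then swap the derivatives.\<close>

lemma normal_flow_speed_derivative:
  assumes sm: "smooth_on U \<alpha>" and J: "open J" "u \<in> J"
    and JU: "\<And>v. v \<in> J \<Longrightarrow> (v, t) \<in> U" and J_regular: "\<And>v. v \<in> J \<Longrightarrow> pD1 \<alpha> (v, t) \<noteq> 0"
    and flow: "\<And>v. v \<in> J \<Longrightarrow> pD2 \<alpha> (v, t) = complex_of_real (F v) * normal \<alpha> (v, t)"
  shows "(pD1 \<alpha> (u, t) \<bullet> pD2 (pD1 \<alpha>) (u, t)) / cmod (pD1 \<alpha> (u, t))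
    = F u * curv \<alpha> (u, t) * cmod (pD1 \<alpha> (u, t))"
proof -
  have p: "(u, t) \<in> U" and nz: "pD1 \<alpha> (u, t) \<noteq> 0" using J JU J_regular by auto
  define T' where "T' = pD1 (tangent \<alpha>) (u, t)"
  have "((\<lambda>v. pD2 \<alpha> (v, t)) has_vector_derivative pD1 (pD2 \<alpha>) (u, t)) (at u)"
    using smooth_on_has_vector_derivative_fst[OF sm p, where bs="[False]"] by simp
  moreover have "((\<lambda>v. tangent \<alpha> (v, t)) has_vector_derivative T') (at u)"
    using tangent_has_vector_derivative[OF sm p nz] unfolding T'_def pD1_def
    by (simp add: vector_derivative_at)
  ultimately have "((\<lambda>v. pD2 \<alpha> (v, t) \<bullet> tangent \<alpha> (v, t)) has_real_derivative
      pD2 \<alpha> (u, t) \<bullet> T' + pD1 (pD2 \<alpha>) (u, t) \<bullet> tangent \<alpha> (u, t)) (at u)"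
    by (rule has_real_derivative_inner_vector)
  moreover have "((\<lambda>v. pD2 \<alpha> (v, t) \<bullet> tangent \<alpha> (v, t)) has_real_derivative 0) (at u)"
    by (rule has_field_derivative_transform_within_open[OF DERIV_const J])
       (simp add: flow normal_def inner_complex_def algebra_simps)
  ultimately have "pD2 \<alpha> (u, t) \<bullet> T' + pD1 (pD2 \<alpha>) (u, t) \<bullet> tangent \<alpha> (u, t) = 0"
    by (rule DERIV_unique)
  moreover have "pD2 \<alpha> (u, t) \<bullet> T' = F u * (T' \<bullet> normal \<alpha> (u, t))"
    using flow[OF J(2)] by (simp add: normal_def inner_complex_def algebra_simps)
  moreover have "T' \<bullet> normal \<alpha> (u, t) = - (cmod (pD1 \<alpha> (u, t)) * curv \<alpha> (u, t))"
    using nz by (simp add: curv_def tangent_def[symmetric] sdiff_def T'_def)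
  ultimately have "pD1 (pD2 \<alpha>) (u, t) \<bullet> tangent \<alpha> (u, t) = F u * curv \<alpha> (u, t) * cmod (pD1 \<alpha> (u, t))"
    by (simp add: algebra_simps)
  then show ?thesis
    by (simp add: smooth_on_pD2_pD1_eq_pD1_pD2[OF sm p] tangent_eq_scaleR inner_commute
        divide_inverse mult.commute)
qed

lemma regular_slice_derivatives:
  assumes sm: "smooth_on U \<alpha>" and slice: "{-1..1} \<times> {t} \<subseteq> U"
    and regular: "\<forall>u\<in>{-1..1}. pD1 \<alpha> (u, t) \<noteq> 0"
  shows "continuous_on {-1..1} (\<lambda>u. cmod (pD1 \<alpha> (u, t)))"
    and "\<And>u. u \<in> {-1..1} \<Longrightarrow> ((\<lambda>v. curv \<alpha> (v, t)) has_real_derivative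
      sdiff \<alpha> (curv \<alpha>) (u, t) * cmod (pD1 \<alpha> (u, t))) (at u within {-1..1})"
    and "continuous_on {-1..1} (\<lambda>u. sdiff \<alpha> (curv \<alpha>) (u, t))"
    and "\<And>u. u \<in> {-1..1} \<Longrightarrow> ((\<lambda>v. sdiff \<alpha> (curv \<alpha>) (v, t)) has_real_derivative
      pD1 (sdiff \<alpha> (curv \<alpha>)) (u, t)) (at u within {-1..1})"
proof -
  show "continuous_on {-1..1} (\<lambda>u. cmod (pD1 \<alpha> (u, t)))"
    using smooth_on_continuous_on_slice[OF sm slice, where bs="[True]"]
    by (auto intro: continuous_intros)
  show "continuous_on {-1..1} (\<lambda>u. sdiff \<alpha> (curv \<alpha>) (u, t))"
    using continuous_on_sdiff_curv[OF sm slice] regular by blast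
  have p: "(u, t) \<in> U" if "u \<in> {-1..1}" for u using slice that by auto
  show "((\<lambda>v. curv \<alpha> (v, t)) has_real_derivative
      sdiff \<alpha> (curv \<alpha>) (u, t) * cmod (pD1 \<alpha> (u, t))) (at u within {-1..1})"
    and "((\<lambda>v. sdiff \<alpha> (curv \<alpha>) (v, t)) has_real_derivative
      pD1 (sdiff \<alpha> (curv \<alpha>)) (u, t)) (at u within {-1..1})" if "u \<in> {-1..1}" for u
    using curv_has_real_derivative_sdiff[OF sm p[OF that]] sdiff_curv_has_real_derivative[OF sm p[OF that]]
      regular that
    by (auto intro: has_field_derivative_at_within)
qed

lemma elastic_flow_speed_derivative_integral_eq_0:
  assumes sm: "smooth_on U \<alpha>"
    and slice: "{-1..1} \<times> {t} \<subseteq> U"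
    and regular: "\<forall>u\<in>{-1..1}. pD1 \<alpha> (u, t) \<noteq> 0"
    and flow: "\<And>u. u \<in> {-1..1} \<Longrightarrow> pD2 \<alpha> (u, t) = complex_of_real (sdiff \<alpha> (sdiff \<alpha> (curv \<alpha>)) (u, t)
       + 1/2 * (curv \<alpha> (u, t))^3 - elastic_lambda \<alpha> t * curv \<alpha> (u, t)) * normal \<alpha> (u, t)"
    and Neumann: "sdiff \<alpha> (curv \<alpha>) (-1, t) = 0" "sdiff \<alpha> (curv \<alpha>) (1, t) = 0"
    and total_curv: "arc_int \<alpha> t (curv \<alpha>) \<noteq> 0"
    \<comment> \<open>forces int k^2 > 0, so lambda is not the junk value of a division by zero\<close>
  shows "integral {-1..1} (\<lambda>u. (pD1 \<alpha> (u, t) \<bullet> pD2 (pD1 \<alpha>) (u, t)) / cmod (pD1 \<alpha> (u, t))) = 0"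
proof -
  have p: "(u, t) \<in> U" if "u \<in> {-1..1}" for u using slice that by auto
  define S where "S u = cmod (pD1 \<alpha> (u, t))" for u
  define K where "K u = curv \<alpha> (u, t)" for u
  define Ks where "Ks u = sdiff \<alpha> (curv \<alpha>) (u, t)" for u
  define D where "D u = pD1 (sdiff \<alpha> (curv \<alpha>)) (u, t)" for u
  note derivs = regular_slice_derivatives[OF sm slice regular]
  have S: "continuous_on {-1..1} S" and Ks: "continuous_on {-1..1} Ks"
    using derivs(1,3) by (simp_all add: S_def[abs_def] Ks_def[abs_def])
  have K: "(K has_real_derivative Ks x * S x) (at x within {-1..1})"
    and D: "(Ks has_real_derivative D x) (at x within {-1..1})" if "x \<in> {-1..1}" for x
    using derivs(2,4)[OF that] by (simp_all add: K_def[abs_def] Ks_def[abs_def] S_def D_def)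
  have "integral {-1..1} (\<lambda>u. (pD1 \<alpha> (u, t) \<bullet> pD2 (pD1 \<alpha>) (u, t)) / cmod (pD1 \<alpha> (u, t)))
    = integral {-1..1} (\<lambda>x. K x * D x + (1/2 * (K x)^3 - elastic_lambda \<alpha> t * K x) * K x * S x)"
  proof (rule integral_spike[of "{-1, 1}"])
    fix u :: real assume "u \<in> {-1..1} - {-1, 1}"
    then have "u \<in> {-1<..<1}" by auto
    have "(pD1 \<alpha> (u, t) \<bullet> pD2 (pD1 \<alpha>) (u, t)) / cmod (pD1 \<alpha> (u, t))
      = (sdiff \<alpha> (sdiff \<alpha> (curv \<alpha>)) (u, t) + 1/2 * (curv \<alpha> (u, t))^3
          - elastic_lambda \<alpha> t * curv \<alpha> (u, t)) * curv \<alpha> (u, t) * cmod (pD1 \<alpha> (u, t))"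
      by (rule normal_flow_speed_derivative[OF sm _ \<open>u \<in> {-1<..<1}\<close>]) (use p regular flow in auto)
    also have "\<dots> = K u * D u + (1/2 * (K u)^3 - elastic_lambda \<alpha> t * K u) * K u * S u"
      using regular \<open>u \<in> {-1<..<1}\<close> by (simp add: sdiff_def S_def K_def D_def field_simps)
    finally show "K u * D u + (1/2 * (K u)^3 - elastic_lambda \<alpha> t * K u) * K u * S u
      = (pD1 \<alpha> (u, t) \<bullet> pD2 (pD1 \<alpha>) (u, t)) / cmod (pD1 \<alpha> (u, t))" by simp
  qed simp
  also have "\<dots> = 0"
    using has_integral_elastic_velocity_mult_curv[OF _ S _ K Ks D] Neumann total_curv
    by (simp add: integral_unique elastic_lambda_def arc_int_def S_def K_def Ks_def)
  finally show ?thesis .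
qed

lemma curve_length_has_real_derivative:
  assumes sm: "smooth_on U \<alpha>" and rect: "{-1..1} \<times> {c..d} \<subseteq> U"
    and regular: "\<forall>u\<in>{-1..1}. \<forall>s\<in>{c..d}. pD1 \<alpha> (u, s) \<noteq> 0"
    and "s \<in> {c..d}"
  shows "(curve_length \<alpha> has_real_derivative
    integral {-1..1} (\<lambda>u. (pD1 \<alpha> (u, s) \<bullet> pD2 (pD1 \<alpha>) (u, s)) / cmod (pD1 \<alpha> (u, s))))
    (at s within {c..d})"
proof -
  define f' where "f' s u = (pD1 \<alpha> (u, s) \<bullet> pD2 (pD1 \<alpha>) (u, s)) / cmod (pD1 \<alpha> (u, s))" for s u
  have "((\<lambda>s. integral (cbox (-1) 1) (\<lambda>u. cmod (pD1 \<alpha> (u, s)))) has_real_derivative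
      integral (cbox (-1) 1) (f' s)) (at s within {c..d})"
  proof (rule leibniz_rule_field_derivative)
    fix s u assume su: "s \<in> {c..d}" "u \<in> cbox (-1::real) 1"
    then have "(u, s) \<in> U" and nz: "pD1 \<alpha> (u, s) \<noteq> 0" using rect regular by auto
    then have "((\<lambda>s. pD1 \<alpha> (u, s)) has_vector_derivative pD2 (pD1 \<alpha>) (u, s)) (at s)"
      using smooth_on_has_vector_derivative_snd[OF sm, where bs="[True]"] by simp
    from has_real_derivative_norm_vector[OF this nz]
    show "((\<lambda>s. cmod (pD1 \<alpha> (u, s))) has_real_derivative f' s u) (at s within {c..d})"
      unfolding f'_def by (rule has_field_derivative_at_within)
  next
    fix s assume "s \<in> {c..d}"
    then have slice: "{-1..1} \<times> {s} \<subseteq> U" using rect by auto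
    have "continuous_on {-1..1} (\<lambda>u. pD1 \<alpha> (u, s))"
      using smooth_on_continuous_on_slice[OF sm slice, where bs="[True]"] by simp
    then show "(\<lambda>u. cmod (pD1 \<alpha> (u, s))) integrable_on cbox (-1) 1"
      unfolding cbox_interval by (intro integrable_continuous_interval continuous_intros)
  next
    have c: "continuous_on ({c..d} \<times> {-1..1}) (\<lambda>q. pderivs bs \<alpha> (snd q, fst q))" for bs
      by (rule continuous_on_compose2[OF smooth_on_continuous_on[OF sm]])
         (use rect in \<open>auto intro!: continuous_intros\<close>)
    have "continuous_on ({c..d} \<times> {-1..1}) (\<lambda>q. pD1 \<alpha> (snd q, fst q))"
      "continuous_on ({c..d} \<times> {-1..1}) (\<lambda>q. pD2 (pD1 \<alpha>) (snd q, fst q))"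
      using c[of "[True]"] c[of "[False, True]"] by simp_all
    then show "continuous_on ({c..d} \<times> cbox (-1) 1) (\<lambda>(s, u). f' s u)"
      unfolding f'_def case_prod_beta cbox_interval using regular
      by (intro continuous_intros) auto
  qed (use \<open>s \<in> {c..d}\<close> in auto)
  moreover have "curve_length \<alpha> = (\<lambda>s. integral {-1..1} (\<lambda>u. cmod (pD1 \<alpha> (u, s))))"
    by (simp add: fun_eq_iff curve_length_def arc_int_def)
  ultimately show ?thesis by (simp add: cbox_interval f'_def[abs_def])
qed

lemma curve_length_eq_if_speed_derivative_integral_eq_0:
  assumes sm: "smooth_on U \<alpha>" and "0 \<le> t" and rect: "{-1..1} \<times> {0..t} \<subseteq> U"
    and regular: "\<forall>u\<in>{-1..1}. \<forall>s\<in>{0..t}. pD1 \<alpha> (u, s) \<noteq> 0"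
    and zero: "\<And>s. s \<in> {0..t} \<Longrightarrow>
      integral {-1..1} (\<lambda>u. (pD1 \<alpha> (u, s) \<bullet> pD2 (pD1 \<alpha>) (u, s)) / cmod (pD1 \<alpha> (u, s))) = 0"
  shows "curve_length \<alpha> t = curve_length \<alpha> 0"
proof -
  have "(curve_length \<alpha> has_real_derivative 0) (at s within {0..t})" if "s \<in> {0..t}" for s
    using curve_length_has_real_derivative[OF sm rect regular that] zero[OF that] by simp
  then obtain c where "\<forall>s\<in>{0..t}. curve_length \<alpha> s = c"
    using has_field_derivative_zero_constant[of "{0..t}"] by blast
  then show ?thesis using \<open>0 \<le> t\<close> by auto
qed

lemma elastic_lambda_bounds:
  assumes sm: "smooth_on U \<alpha>" and slice: "{-1..1} \<times> {t} \<subseteq> U"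
    and regular: "\<forall>u\<in>{-1..1}. pD1 \<alpha> (u, t) \<noteq> 0"
    and total_curv: "arc_int \<alpha> t (curv \<alpha>) \<noteq> 0"
  shows "- (curve_length \<alpha> t * arc_int \<alpha> t (\<lambda>p. (sdiff \<alpha> (curv \<alpha>) p)^2))
      / (arc_int \<alpha> t (curv \<alpha>))^2 \<le> elastic_lambda \<alpha> t"
    and "elastic_lambda \<alpha> t
      \<le> 2 * curve_length \<alpha> t / pi * arc_int \<alpha> t (\<lambda>p. (sdiff \<alpha> (curv \<alpha>) p)^2)
        + (mean_curv \<alpha> t)^2"
proof -
  note derivs = regular_slice_derivatives[OF sm slice regular]
  show "- (curve_length \<alpha> t * arc_int \<alpha> t (\<lambda>p. (sdiff \<alpha> (curv \<alpha>) p)^2))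
      / (arc_int \<alpha> t (curv \<alpha>))^2 \<le> elastic_lambda \<alpha> t"
    using lambda_ratio_ge[OF derivs(1) _ DERIV_continuous_on[OF derivs(2)] derivs(3)] total_curv
    by (simp add: elastic_lambda_def curve_length_def arc_int_def)
  have upper: "elastic_lambda \<alpha> t
      \<le> curve_length \<alpha> t / 3 * arc_int \<alpha> t (\<lambda>p. (sdiff \<alpha> (curv \<alpha>) p)^2) + (mean_curv \<alpha> t)^2"
    using lambda_ratio_le[OF derivs(1) _ derivs(2,3)] total_curv
    by (simp add: elastic_lambda_def mean_curv_def curve_length_def arc_int_def)
  have "0 \<le> curve_length \<alpha> t" "0 \<le> arc_int \<alpha> t (\<lambda>p. (sdiff \<alpha> (curv \<alpha>) p)^2)"
    unfolding curve_length_def arc_int_def using derivs(1,3)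
    by (auto intro!: integral_nonneg integrable_continuous_interval continuous_intros)
  then have "curve_length \<alpha> t * arc_int \<alpha> t (\<lambda>p. (sdiff \<alpha> (curv \<alpha>) p)^2) * (1 / 3)
      \<le> curve_length \<alpha> t * arc_int \<alpha> t (\<lambda>p. (sdiff \<alpha> (curv \<alpha>) p)^2) * (2 / pi)"
    using pi_less_4 by (intro mult_left_mono) (auto simp: field_simps)
  with upper show "elastic_lambda \<alpha> t
      \<le> 2 * curve_length \<alpha> t / pi * arc_int \<alpha> t (\<lambda>p. (sdiff \<alpha> (curv \<alpha>) p)^2)
        + (mean_curv \<alpha> t)^2"
    by simp
qed

theorem mainTheorem5:
  fixes \<alpha> :: "real \<times> real \<Rightarrow> complex" and \<theta>1 \<theta>2 T \<omega> :: real and U :: "(real \<times> real) set"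
  assumes angles: "0 \<le> \<theta>2" "\<theta>2 < \<theta>1" "\<theta>1 < 2 * pi"
    and omega: "\<omega> = (\<theta>1 - \<theta>2) / (2 * pi)"
    and smooth: "smooth_on U \<alpha>" "{-1..1} \<times> {0..<T} \<subseteq> U"
    and regular: "\<forall>u\<in>{-1..1}. \<forall>t\<in>{0..<T}. pD1 \<alpha> (u, t) \<noteq> 0"
    and flow: "\<forall>u\<in>{-1..1}. \<forall>t\<in>{0..<T}.
       pD2 \<alpha> (u, t) = complex_of_real (sdiff \<alpha> (sdiff \<alpha> (curv \<alpha>)) (u, t)
                           + 1/2 * (curv \<alpha> (u, t))^3
                           - elastic_lambda \<alpha> t * curv \<alpha> (u, t)) * normal \<alpha> (u, t)"
    and bc: "\<forall>t\<in>{0..<T}. gen_neumann \<theta>1 \<theta>2 \<alpha> t"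
    and total_curv: "\<forall>t\<in>{0..<T}. arc_int \<alpha> t (curv \<alpha>) = 2 * pi * \<omega>"
  shows "\<forall>t\<in>{0..<T}.
     - (curve_length \<alpha> 0 * arc_int \<alpha> t (\<lambda>p. (sdiff \<alpha> (curv \<alpha>) p)^2)) / (2 * pi * \<omega>)^2
        \<le> elastic_lambda \<alpha> t \<and>
     elastic_lambda \<alpha> t
        \<le> 2 * curve_length \<alpha> 0 / pi * arc_int \<alpha> t (\<lambda>p. (sdiff \<alpha> (curv \<alpha>) p)^2)
          + (mean_curv \<alpha> t)^2"
proof (intro ballI)
  fix t assume t: "t \<in> {0..<T}"
  have slice: "{-1..1} \<times> {s} \<subseteq> U" and regular_at: "\<forall>u\<in>{-1..1}. pD1 \<alpha> (u, s) \<noteq> 0"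
    and curv_pos: "0 < arc_int \<alpha> s (curv \<alpha>)" if "s \<in> {0..t}" for s
    using smooth(2) regular total_curv omega angles that t by auto
  have "curve_length \<alpha> t = curve_length \<alpha> 0"
  proof (rule curve_length_eq_if_speed_derivative_integral_eq_0[OF smooth(1)])
    fix s assume "s \<in> {0..t}"
    then show "integral {-1..1} (\<lambda>u. (pD1 \<alpha> (u, s) \<bullet> pD2 (pD1 \<alpha>) (u, s)) / cmod (pD1 \<alpha> (u, s))) = 0"
      using flow bc t curv_pos[of s]
      by (intro elastic_flow_speed_derivative_integral_eq_0[OF smooth(1) slice regular_at])
         (auto simp: gen_neumann_def)
  qed (use smooth(2) regular t in auto)
  moreover have "arc_int \<alpha> t (curv \<alpha>) = 2 * pi * \<omega>" using total_curv t by blast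
  moreover note elastic_lambda_bounds[OF smooth(1) slice regular_at, of t] curv_pos[of t] t
  ultimately show "- (curve_length \<alpha> 0 * arc_int \<alpha> t (\<lambda>p. (sdiff \<alpha> (curv \<alpha>) p)^2)) / (2 * pi * \<omega>)^2
        \<le> elastic_lambda \<alpha> t \<and>
     elastic_lambda \<alpha> t
        \<le> 2 * curve_length \<alpha> 0 / pi * arc_int \<alpha> t (\<lambda>p. (sdiff \<alpha> (curv \<alpha>) p)^2)
          + (mean_curv \<alpha> t)^2"
    by (auto simp: zero_less_mult_iff)
qed

end
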